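(* Let $n\geq m\geq 1$ be integers, and let $\mathcal{A}=\{H_1,\ldots,H_m\}$ be a toric arrangement in $(\mathbb{C}^{*})^n$, where $$H_i=\{(z_1,\ldots,z_n)\in(\mathbb{C}^* )^n : z_1^{p_{i,1}}\cdots z_n^{p_{i,n}}=\alpha_i\},\qquad p_{i,j}\in\mathbb{Z},\ \alpha_i\in\mathbb{C}^*,$$ for $1\leq i\leq m$, $1\leq j\leq n$. Let $\tilde{M}_{\mathcal{A}}=(p_{i,j})\in M_{m,n}(\mathbb{Z})$ be its associated matrix. If $\tilde{M}_{\mathcal{A}}$ has rank $m$, then there exists a centered toric arrangement $\mathcal{B}=\{T_1,\ldots,T_m\}$ in $(\mathbb{C}^* )^n$ such that the complement manifolds $M(\mathcal{A})$ and $M(\mathcal{B})$ are diffeomorphic.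
   Context: A toric arrangement in $(\mathbb{C}^* )^n$ is a finite collection of subtori of the form $\{(z_1,\ldots,z_n)\in(\mathbb{C}^* )^n : z_1^{q_1}\cdots z_n^{q_n}=\beta\}$ with $q_j\in\mathbb{Z}$, $\beta\in\mathbb{C}^*$. Its complement manifold $M(\cdot)$ is $(\mathbb{C}^* )^n$ minus the union of its subtori. The associated matrix of the arrangement $\{H_1,\dots,H_m\}$ is the $m\times n$ integer matrix whose $i$-th row is the exponent vector $(p_{i,1},\ldots,p_{i,n})$ of $H_i$. A toric arrangement is centered if all the constants $\beta$ on the right-hand sides of its defining equations equal $1$. *)

theory Defs
  imports "HOL-Analysis.Analysis"
begin

text \<open>Points of (C^*)^n are modelled in complex^'n, 'n a finite index type with CARD('n) = n.
  A family of m hypersurfaces is indexed by a finite type 'm with CARD('m) = m.\<close>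

definition torus :: "(complex ^ 'n) set" where
  "torus = {z. \<forall>j. z $ j \<noteq> 0}"

definition subtorus :: "int ^ 'n \<Rightarrow> complex \<Rightarrow> (complex ^ 'n) set" where
  "subtorus q \<beta> = {z \<in> torus. (\<Prod>j\<in>UNIV. (z $ j) powi (q $ j)) = \<beta>}"

definition complement :: "int ^ 'n ^ 'm \<Rightarrow> ('m \<Rightarrow> complex) \<Rightarrow> (complex ^ 'n) set" where
  "complement P \<alpha> = torus - (\<Union>i. subtorus (P $ i) (\<alpha> i))"

text \<open>Rank of an integer matrix (rank over Q, equivalently over R).\<close>
definition int_matrix_rank :: "int ^ 'n ^ 'm \<Rightarrow> nat" where
  "int_matrix_rank P = rank (\<chi> i j. real_of_int (P $ i $ j))"

inductive_set iter_dir_derivs ::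
  "('a::real_normed_vector \<Rightarrow> 'b::real_normed_vector) \<Rightarrow> 'a set \<Rightarrow> ('a \<Rightarrow> 'b) set"
  for f S where
  base: "f \<in> iter_dir_derivs f S"
| step: "g \<in> iter_dir_derivs f S \<Longrightarrow> (\<forall>x\<in>S. g differentiable (at x)) \<Longrightarrow>
         (\<lambda>x. frechet_derivative g (at x) v) \<in> iter_dir_derivs f S"

text \<open>C^infinity (real sense) on an open set S: all iterated directional derivatives exist.\<close>
definition smooth_on :: "'a set \<Rightarrow> ('a::real_normed_vector \<Rightarrow> 'b::real_normed_vector) \<Rightarrow> bool" where
  "smooth_on S f \<longleftrightarrow> open S \<and> (\<forall>g\<in>iter_dir_derivs f S. \<forall>x\<in>S. g differentiable (at x))"

definition diffeomorphic :: "'a::real_normed_vector set \<Rightarrow> 'b::real_normed_vector set \<Rightarrow> bool" where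
  "diffeomorphic S T \<longleftrightarrow> (\<exists>f g. (\<forall>x\<in>S. f x \<in> T \<and> g (f x) = x) \<and> (\<forall>y\<in>T. g y \<in> S \<and> f (g y) = y)
      \<and> smooth_on S f \<and> smooth_on T g)"

end

theory Submission
  imports Defs
begin

text \<open>Full rank makes the real linear map x \<mapsto> P x surjective, so applied separately to real and
  imaginary parts it solves P w = Ln \<beta> over the complex numbers.  The point c = exp w of the torus
  then has characters z^(P_i) equal to \<beta>_i, and rescaling the coordinates by c (a linear
  automorphism, hence smooth) multiplies every character z^(P_i) by c^(P_i).  With \<beta> = 1/\<alpha> this
  carries M(\<A>) onto the complement of the centered arrangement with the same matrix.\<close>

lemma smooth_on_bounded_linear:
  fixes f :: "'a::real_normed_vector \<Rightarrow> 'b::real_normed_vector"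
  assumes "bounded_linear f" "open S"
  shows "smooth_on S f"
proof -
  have linear_or_const: "bounded_linear g \<or> (\<exists>k. g = (\<lambda>_. k))" if "g \<in> iter_dir_derivs f S" for g
    using that
  proof induction
    case base
    then show ?case using assms(1) by blast
  next
    case (step g v)
    then consider "bounded_linear g" | k where "g = (\<lambda>_. k)" by blast
    then show ?case
    proof cases
      case 1
      then have "frechet_derivative g (at x) = g" for x
        by (metis bounded_linear_imp_has_derivative frechet_derivative_at)
      then show ?thesis using 1 by auto
    next
      case 2
      then have "frechet_derivative g (at x) = (\<lambda>_. 0)" for x
        by (metis has_derivative_const frechet_derivative_at)
      then show ?thesis by auto
    qed
  qed
  show ?thesis
    unfolding smooth_on_def
    using assms(2) linear_or_const
    by (metis bounded_linear_imp_differentiable differentiable_const)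
qed

definition character :: "int ^ 'n \<Rightarrow> complex ^ 'n \<Rightarrow> complex" where
  "character q z = (\<Prod>j\<in>UNIV. (z $ j) powi (q $ j))"

lemma subtorus_eq_character: "subtorus q \<beta> = {z \<in> torus. character q z = \<beta>}"
  by (simp add: subtorus_def character_def)

lemma character_mult: "character q (c * z) = character q c * character q z"
  by (simp add: character_def power_int_mult_distrib prod.distrib)

lemma character_nonzero: "z \<in> torus \<Longrightarrow> character q z \<noteq> 0"
  by (simp add: character_def torus_def)

lemma character_exp: "character q (\<chi> j. exp (w $ j)) = exp (\<Sum>j\<in>UNIV. of_int (q $ j) * w $ j)"
  by (simp add: character_def exp_power_int exp_sum)

lemma continuous_on_character: "continuous_on torus (character q)"
  unfolding character_def torus_def by (auto intro!: continuous_intros)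

lemma open_torus: "open (torus :: (complex ^ 'n) set)"
proof -
  have eq: "torus = (\<Inter>j. {z::complex ^ 'n. z $ j \<noteq> 0})"
    by (auto simp: torus_def)
  have "open {z::complex ^ 'n. z $ j \<noteq> 0}" for j
    by (intro open_Collect_neq continuous_intros)
  then show ?thesis
    unfolding eq by (intro open_INT) simp_all
qed

lemma open_complement: "open (complement P \<alpha>)"
proof -
  have eq: "complement P \<alpha> = (\<Inter>i. torus \<inter> character (P $ i) -` (- {\<alpha> i}))"
    unfolding complement_def subtorus_eq_character by blast
  have "open (torus \<inter> character (P $ i) -` (- {\<alpha> i}))" for i
    by (intro continuous_open_preimage continuous_on_character open_torus open_Compl closed_singleton)
  then show ?thesis
    unfolding eq by (intro open_INT) simp_all
qed
lemma bounded_linear_vec_mult: "bounded_linear (\<lambda>z::complex ^ 'n. c * z)"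
proof -
  have "linear (\<lambda>z::complex ^ 'n. c * z)"
    by (rule linearI) (auto simp: vec_eq_iff algebra_simps scaleR_conv_of_real)
  then show ?thesis by (simp add: linear_conv_bounded_linear)
qed

lemma mult_mem_complement_iff:
  assumes "c \<in> torus"
  shows "c * z \<in> complement P (\<lambda>i. character (P $ i) c * \<alpha> i) \<longleftrightarrow> z \<in> complement P \<alpha>"
proof -
  have "c * z \<in> torus \<longleftrightarrow> z \<in> torus"
    using assms by (simp add: torus_def)
  moreover have "character (P $ i) (c * z) = character (P $ i) c * \<alpha> i \<longleftrightarrow> character (P $ i) z = \<alpha> i" for i
    using character_nonzero[OF assms] by (simp add: character_mult)
  ultimately show ?thesis
    by (simp add: complement_def subtorus_eq_character)
qed

lemma diffeomorphic_complement_rescale: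
  fixes c :: "complex ^ 'n"
  assumes "c \<in> torus"
  shows "diffeomorphic (complement P \<alpha>) (complement P (\<lambda>i. character (P $ i) c * \<alpha> i))"
proof -
  define c' :: "complex ^ 'n" where "c' = (\<chi> j. inverse (c $ j))"
  have c': "c' \<in> torus" "c' * (c * z) = z" "c * (c' * z) = z" for z
    using assms by (simp_all add: c'_def torus_def vec_eq_iff)
  show ?thesis
    unfolding diffeomorphic_def
  proof (intro exI conjI ballI)
    fix z assume "z \<in> complement P \<alpha>"
    then show "c * z \<in> complement P (\<lambda>i. character (P $ i) c * \<alpha> i)"
      using mult_mem_complement_iff[OF assms] by blast
    show "c' * (c * z) = z" by (fact c')
  next
    fix y assume "y \<in> complement P (\<lambda>i. character (P $ i) c * \<alpha> i)"
    then show "c' * y \<in> complement P \<alpha>"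
      using mult_mem_complement_iff[OF assms] c'(3) by metis
    show "c * (c' * y) = y" by (fact c')
  qed (intro smooth_on_bounded_linear bounded_linear_vec_mult open_complement)+
qed

lemma surj_matrix_vector_mult_complex_solution:
  fixes A :: "real ^ 'n ^ 'm" and b :: "'m \<Rightarrow> complex"
  assumes "surj ((*v) A)"
  shows "\<exists>w :: complex ^ 'n. \<forall>i. (\<Sum>j\<in>UNIV. of_real (A $ i $ j) * w $ j) = b i"
proof -
  obtain x y where x: "A *v x = (\<chi> i. Re (b i))" and y: "A *v y = (\<chi> i. Im (b i))"
    using assms by (metis surjD)
  define w :: "complex ^ 'n" where "w = (\<chi> j. Complex (x $ j) (y $ j))"
  have "(\<Sum>j\<in>UNIV. of_real (A $ i $ j) * w $ j) = b i" for i
  proof (rule complex_eqI)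
    show "Re (\<Sum>j\<in>UNIV. of_real (A $ i $ j) * w $ j) = Re (b i)"
      using x by (simp add: w_def vec_eq_iff matrix_vector_mult_def)
    show "Im (\<Sum>j\<in>UNIV. of_real (A $ i $ j) * w $ j) = Im (b i)"
      using y by (simp add: w_def vec_eq_iff matrix_vector_mult_def)
  qed
  then show ?thesis by blast
qed

lemma full_rank_surj:
  assumes "int_matrix_rank P = CARD('m)"
  shows "surj ((*v) (\<chi> i j. real_of_int ((P :: int ^ 'n ^ 'm) $ i $ j)))"
  using assms full_rank_surjective unfolding int_matrix_rank_def by blast

lemma full_rank_rows_nonzero:
  assumes "int_matrix_rank P = CARD('m)"
  shows "(P :: int ^ 'n ^ 'm) $ i \<noteq> 0"
proof
  assume "P $ i = 0"
  obtain x where "(\<chi> i j. real_of_int (P $ i $ j)) *v x = axis i 1"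
    using full_rank_surj[OF assms] by (metis surjD)
  then have "((\<chi> i j. real_of_int (P $ i $ j)) *v x) $ i = 1"
    by (simp add: axis_def)
  with \<open>P $ i = 0\<close> show False
    by (simp add: matrix_vector_mult_def)
qed

lemma full_rank_characters_surj:
  fixes P :: "int ^ 'n ^ 'm" and \<beta> :: "'m \<Rightarrow> complex"
  assumes "int_matrix_rank P = CARD('m)" "\<forall>i. \<beta> i \<noteq> 0"
  shows "\<exists>c\<in>torus. \<forall>i. character (P $ i) c = \<beta> i"
proof -
  obtain w :: "complex ^ 'n" where w: "\<And>i. (\<Sum>j\<in>UNIV. of_int (P $ i $ j) * w $ j) = Ln (\<beta> i)"
    using surj_matrix_vector_mult_complex_solution[OF full_rank_surj[OF assms(1)], of "\<lambda>i. Ln (\<beta> i)"]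
    by auto
  have "character (P $ i) (\<chi> j. exp (w $ j)) = \<beta> i" for i
    using assms(2) by (simp add: character_exp w)
  moreover have "(\<chi> j. exp (w $ j)) \<in> torus"
    by (simp add: torus_def)
  ultimately show ?thesis by blast
qed

theorem theorem2p1:
  fixes P :: "int ^ 'n ^ 'm" and \<alpha> :: "'m \<Rightarrow> complex"
  assumes "CARD('m) \<le> CARD('n)"
    and "\<forall>i. \<alpha> i \<noteq> 0"
    and "int_matrix_rank P = CARD('m)"
  shows "\<exists>Q :: int ^ 'n ^ 'm. (\<forall>i. Q $ i \<noteq> 0) \<and>
           diffeomorphic (complement P \<alpha>) (complement Q (\<lambda>_. 1))"
proof -
  obtain c where "c \<in> torus" and c: "\<And>i. character (P $ i) c = inverse (\<alpha> i)"
    using full_rank_characters_surj[OF assms(3), of "\<lambda>i. inverse (\<alpha> i)"] assms(2) by auto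
  have "(\<lambda>i. character (P $ i) c * \<alpha> i) = (\<lambda>_. 1)"
    using assms(2) by (simp add: c)
  then have "diffeomorphic (complement P \<alpha>) (complement P (\<lambda>_. 1))"
    using diffeomorphic_complement_rescale[OF \<open>c \<in> torus\<close>, of P \<alpha>] by simp
  then show ?thesis
    using full_rank_rows_nonzero[OF assms(3)] by blast
qed

end
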